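(* Let $\alpha$ be a graph function on a strongly connected digraph $G$, with heights $y$, levels $x$, momenta $m$ and raising imbalances $\rho_v=\rho^R_v$; let $y_{\min}=\min_u y_u$. For every vertex $v$: (i) $m_v\le\rho(S_v)+z_v$; (ii) $y_v-y_{\min}\le|S_v|\cdot\rho(S_v)$.
   Context: $G$ is a strongly connected directed graph (self-loops allowed); $u\to v$ means $(u,v)$ is an edge. A graph function assigns a real weight $\alpha_{uv}$ to each edge. $\alpha_v^{\text{in}}=\max_{u\to v}\alpha_{uv}$, $\alpha_v^{\text{out}}=\max_{v\to w}\alpha_{vw}$, $\rho^R_v=\max\{0,\alpha_v^{\text{out}}-\alpha_v^{\text{in}}\}$. A raising operation at $v$: if $\rho^R_v>0$ add $\rho^R_v/2$ to each incoming edge weight $\alpha_{uv}$ ($u\ne v$) and subtract it from each outgoing $\alpha_{vw}$ ($w\neq v$); otherwise do nothing. Starting from $\alpha$, for any infinite sequence of raising operations in which every vertex occurs infinitely often, the cumulative amount by which each vertex has been raised converges to a limit vector $r^*$ independent of the sequence, and the graph functions converge to the raising-balanced graph function $\alpha^R_{uv}=\alpha_{uv}+r^*_v-r^*_u$. Heights: $y_v=-r^*_v$. Levels: $x_v=\max_{u\to v}\alpha^R_{uv}$. Momentum: $m_v=\max_{u\to v}(\alpha_{uv}-x_v)$. $S_v=\{u: y_u<y_v\}$, $\rho(S_v)=\sum_{u\in S_v}\rho_u$, and $z_v=\max\{x_u: y_u\le y_v\}-x_v$. *)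

theory Defs
  imports "HOL-Analysis.Analysis"
begin

text \<open>A digraph on a finite vertex type 'v is an edge relation E (E u v means u -> v,
self-loops allowed). A graph function is a weight function alpha :: 'v => 'v => real,
whose values are only relevant on edges.\<close>

definition strongly_connected :: "('v \<Rightarrow> 'v \<Rightarrow> bool) \<Rightarrow> bool" where
  "strongly_connected E \<longleftrightarrow> (\<forall>u v. E\<^sup>+\<^sup>+ u v)"

definition alpha_in :: "('v \<Rightarrow> 'v \<Rightarrow> bool) \<Rightarrow> ('v \<Rightarrow> 'v \<Rightarrow> real) \<Rightarrow> 'v \<Rightarrow> real" where
  "alpha_in E \<alpha> v = Max {\<alpha> u v | u. E u v}"

definition alpha_out :: "('v \<Rightarrow> 'v \<Rightarrow> bool) \<Rightarrow> ('v \<Rightarrow> 'v \<Rightarrow> real) \<Rightarrow> 'v \<Rightarrow> real" where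
  "alpha_out E \<alpha> v = Max {\<alpha> v w | w. E v w}"

definition rhoR :: "('v \<Rightarrow> 'v \<Rightarrow> bool) \<Rightarrow> ('v \<Rightarrow> 'v \<Rightarrow> real) \<Rightarrow> 'v \<Rightarrow> real" where
  "rhoR E \<alpha> v = max 0 (alpha_out E \<alpha> v - alpha_in E \<alpha> v)"

definition raise_op :: "('v \<Rightarrow> 'v \<Rightarrow> bool) \<Rightarrow> ('v \<Rightarrow> 'v \<Rightarrow> real) \<Rightarrow> 'v \<Rightarrow> ('v \<Rightarrow> 'v \<Rightarrow> real)" where
  "raise_op E \<alpha> v =
     (if rhoR E \<alpha> v > 0 then
        (\<lambda>a b. \<alpha> a b + (if b = v \<and> a \<noteq> v then rhoR E \<alpha> v / 2 else 0)
                      - (if a = v \<and> b \<noteq> v then rhoR E \<alpha> v / 2 else 0))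
      else \<alpha>)"

fun alpha_seq :: "('v \<Rightarrow> 'v \<Rightarrow> bool) \<Rightarrow> ('v \<Rightarrow> 'v \<Rightarrow> real) \<Rightarrow> (nat \<Rightarrow> 'v) \<Rightarrow> nat \<Rightarrow> ('v \<Rightarrow> 'v \<Rightarrow> real)" where
  "alpha_seq E \<alpha> s 0 = \<alpha>"
| "alpha_seq E \<alpha> s (Suc n) = raise_op E (alpha_seq E \<alpha> s n) (s n)"

definition cum_raise :: "('v \<Rightarrow> 'v \<Rightarrow> bool) \<Rightarrow> ('v \<Rightarrow> 'v \<Rightarrow> real) \<Rightarrow> (nat \<Rightarrow> 'v) \<Rightarrow> nat \<Rightarrow> 'v \<Rightarrow> real" where
  "cum_raise E \<alpha> s n v = (\<Sum>k\<in>{k. k < n \<and> s k = v}. rhoR E (alpha_seq E \<alpha> s k) v / 2)"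

definition fair_seq :: "(nat \<Rightarrow> 'v) \<Rightarrow> bool" where
  "fair_seq s \<longleftrightarrow> (\<forall>v. infinite {n. s n = v})"

definition alphaR :: "('v \<Rightarrow> 'v \<Rightarrow> real) \<Rightarrow> ('v \<Rightarrow> real) \<Rightarrow> 'v \<Rightarrow> 'v \<Rightarrow> real" where
  "alphaR \<alpha> r u v = \<alpha> u v + r v - r u"

definition height :: "('v \<Rightarrow> real) \<Rightarrow> 'v \<Rightarrow> real" where
  "height r v = - r v"

definition level :: "('v \<Rightarrow> 'v \<Rightarrow> bool) \<Rightarrow> ('v \<Rightarrow> 'v \<Rightarrow> real) \<Rightarrow> ('v \<Rightarrow> real) \<Rightarrow> 'v \<Rightarrow> real" where
  "level E \<alpha> r v = Max {alphaR \<alpha> r u v | u. E u v}"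

definition momentum :: "('v \<Rightarrow> 'v \<Rightarrow> bool) \<Rightarrow> ('v \<Rightarrow> 'v \<Rightarrow> real) \<Rightarrow> ('v \<Rightarrow> real) \<Rightarrow> 'v \<Rightarrow> real" where
  "momentum E \<alpha> r v = Max {\<alpha> u v - level E \<alpha> r v | u. E u v}"

definition Sset :: "('v \<Rightarrow> real) \<Rightarrow> 'v \<Rightarrow> 'v set" where
  "Sset r v = {u. height r u < height r v}"

definition rho_set :: "('v \<Rightarrow> 'v \<Rightarrow> bool) \<Rightarrow> ('v \<Rightarrow> 'v \<Rightarrow> real) \<Rightarrow> 'v set \<Rightarrow> real" where
  "rho_set E \<alpha> S = (\<Sum>u\<in>S. rhoR E \<alpha> u)"

definition zval :: "('v \<Rightarrow> 'v \<Rightarrow> bool) \<Rightarrow> ('v \<Rightarrow> 'v \<Rightarrow> real) \<Rightarrow> ('v \<Rightarrow> real) \<Rightarrow> 'v \<Rightarrow> real" where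
  "zval E \<alpha> r v = Max {level E \<alpha> r u | u. height r u \<le> height r v} - level E \<alpha> r v"

end

theory Submission
  imports Defs
begin

text \<open>The limit r* of the raising process is the least nonnegative potential r for which the
  graph function \<alpha>(u,v) + r v - r u is balanced (every out-weight at most the in-level): each
  raising step is monotone in the potential and cannot overshoot such a potential, and a fair
  process leaves no imbalance in the limit. Minimality means no nonempty set of positive vertices
  can be lowered by a small amount while keeping balance. Consequently, for the vertices raised
  more than v, the largest balanced in-level X among them is carried by an edge leaving them
  downwards; otherwise the X-edges among them contain a cycle whose forward closure could be
  lowered. Following maximising in-edges of \<alpha> upwards, every step costs at most the imbalance
  \<rho> of a vertex raised more, so the original weights of edges out of that set exceed X by at
  most \<rho>(S_v). This gives (i), and it bounds each gap between consecutive heights by \<rho>(S_v);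
  there are at most |S_v| such gaps below v, which gives (ii).\<close>

lemma Max_setcompr_ge:
  fixes f :: "'v::finite \<Rightarrow> 'a::linorder"
  assumes "P u" shows "f u \<le> Max {f u |u. P u}"
  by (rule Max_ge) (auto intro: assms)

lemma Max_setcompr_le:
  fixes f :: "'v::finite \<Rightarrow> 'a::linorder"
  assumes "\<exists>u. P u" "\<And>u. P u \<Longrightarrow> f u \<le> c" shows "Max {f u |u. P u} \<le> c"
  using assms by (subst Max_le_iff) auto

lemma Max_setcompr_attained:
  fixes f :: "'v::finite \<Rightarrow> 'a::linorder"
  assumes "\<exists>u. P u" shows "\<exists>u. P u \<and> f u = Max {f u |u. P u}"
proof -
  have "Max {f u |u. P u} \<in> {f u |u. P u}"
    by (rule Max_in) (use assms in auto)
  then show ?thesis by auto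
qed

lemma Max_setcompr_abs_diff_le:
  fixes f g :: "'v::finite \<Rightarrow> real"
  assumes "\<exists>u. P u" "\<And>u. P u \<Longrightarrow> \<bar>f u - g u\<bar> \<le> e"
  shows "\<bar>Max {f u |u. P u} - Max {g u |u. P u}\<bar> \<le> e"
proof -
  have "Max {f u |u. P u} \<le> Max {g u |u. P u} + e"
    by (rule Max_setcompr_le[OF assms(1)])
       (use assms(2) Max_setcompr_ge[of P _ g] in \<open>smt (verit)\<close>)
  moreover have "Max {g u |u. P u} \<le> Max {f u |u. P u} + e"
    by (rule Max_setcompr_le[OF assms(1)])
       (use assms(2) Max_setcompr_ge[of P _ f] in \<open>smt (verit)\<close>)
  ultimately show ?thesis by linarith
qed

lemma alpha_out_le_alpha_in_plus_rhoR: "alpha_out E \<beta> x \<le> alpha_in E \<beta> x + rhoR E \<beta> x"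
  unfolding rhoR_def by simp

lemma rhoR_nonneg: "0 \<le> rhoR E \<beta> x"
  unfolding rhoR_def by simp

context
  fixes E :: "'v::finite \<Rightarrow> 'v \<Rightarrow> bool"
begin

lemma alpha_in_ge: "E u x \<Longrightarrow> \<beta> u x \<le> alpha_in E \<beta> x"
  unfolding alpha_in_def by (rule Max_setcompr_ge[of "\<lambda>u. E u x" u "\<lambda>u. \<beta> u x"])

lemma alpha_out_ge: "E x w \<Longrightarrow> \<beta> x w \<le> alpha_out E \<beta> x"
  unfolding alpha_out_def by (rule Max_setcompr_ge[of "E x" w "\<beta> x"])

lemma alpha_in_attained: "\<exists>u. E u x \<Longrightarrow> \<exists>u. E u x \<and> \<beta> u x = alpha_in E \<beta> x"
  unfolding alpha_in_def by (rule Max_setcompr_attained[of "\<lambda>u. E u x" "\<lambda>u. \<beta> u x"])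

lemma alpha_out_attained: "\<exists>w. E x w \<Longrightarrow> \<exists>w. E x w \<and> \<beta> x w = alpha_out E \<beta> x"
  unfolding alpha_out_def by (rule Max_setcompr_attained[of "E x" "\<beta> x"])

lemma alpha_out_le: "\<exists>w. E x w \<Longrightarrow> (\<And>w. E x w \<Longrightarrow> \<beta> x w \<le> c) \<Longrightarrow> alpha_out E \<beta> x \<le> c"
  unfolding alpha_out_def by (rule Max_setcompr_le[of "E x" "\<beta> x"])

lemma alpha_in_le: "\<exists>u. E u x \<Longrightarrow> (\<And>u. E u x \<Longrightarrow> \<beta> u x \<le> c) \<Longrightarrow> alpha_in E \<beta> x \<le> c"
  unfolding alpha_in_def by (rule Max_setcompr_le[of "\<lambda>u. E u x" "\<lambda>u. \<beta> u x"])

lemma alpha_in_alphaR_abs_diff_le: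
  fixes \<alpha> :: "'v \<Rightarrow> 'v \<Rightarrow> real" and r r' :: "'v \<Rightarrow> real"
  assumes "\<exists>u. E u x" and "\<And>u. \<bar>r u - r' u\<bar> \<le> e"
  shows "\<bar>alpha_in E (alphaR \<alpha> r) x - alpha_in E (alphaR \<alpha> r') x\<bar> \<le> 2 * e"
  unfolding alpha_in_def
proof (rule Max_setcompr_abs_diff_le[OF assms(1)])
  fix u show "\<bar>alphaR \<alpha> r u x - alphaR \<alpha> r' u x\<bar> \<le> 2 * e"
    using assms(2)[of x] assms(2)[of u] by (simp add: alphaR_def abs_le_iff)
qed

lemma alpha_out_alphaR_abs_diff_le:
  fixes \<alpha> :: "'v \<Rightarrow> 'v \<Rightarrow> real" and r r' :: "'v \<Rightarrow> real"
  assumes "\<exists>w. E x w" and "\<And>u. \<bar>r u - r' u\<bar> \<le> e"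
  shows "\<bar>alpha_out E (alphaR \<alpha> r) x - alpha_out E (alphaR \<alpha> r') x\<bar> \<le> 2 * e"
  unfolding alpha_out_def
proof (rule Max_setcompr_abs_diff_le[OF assms(1)])
  fix w show "\<bar>alphaR \<alpha> r x w - alphaR \<alpha> r' x w\<bar> \<le> 2 * e"
    using assms(2)[of x] assms(2)[of w] by (simp add: alphaR_def abs_le_iff)
qed

lemma rhoR_alphaR_abs_diff_le:
  fixes \<alpha> :: "'v \<Rightarrow> 'v \<Rightarrow> real" and r r' :: "'v \<Rightarrow> real"
  assumes "\<exists>u. E u x" "\<exists>w. E x w" and "\<And>u. \<bar>r u - r' u\<bar> \<le> e"
  shows "\<bar>rhoR E (alphaR \<alpha> r) x - rhoR E (alphaR \<alpha> r') x\<bar> \<le> 4 * e"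
proof -
  have "\<bar>alpha_in E (alphaR \<alpha> r) x - alpha_in E (alphaR \<alpha> r') x\<bar> \<le> 2 * e"
    by (rule alpha_in_alphaR_abs_diff_le) (use assms in auto)
  moreover have "\<bar>alpha_out E (alphaR \<alpha> r) x - alpha_out E (alphaR \<alpha> r') x\<bar> \<le> 2 * e"
    by (rule alpha_out_alphaR_abs_diff_le) (use assms in auto)
  ultimately show ?thesis
    unfolding rhoR_def by (simp add: abs_le_iff max_def)
qed

end

definition balanced :: "('v \<Rightarrow> 'v \<Rightarrow> bool) \<Rightarrow> ('v \<Rightarrow> 'v \<Rightarrow> real) \<Rightarrow> bool" where
  "balanced E \<beta> \<longleftrightarrow> (\<forall>x. alpha_out E \<beta> x \<le> alpha_in E \<beta> x)"

lemma balanced_iff_rhoR_eq_0: "balanced E \<beta> \<longleftrightarrow> (\<forall>x. rhoR E \<beta> x = 0)"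
proof -
  have "max 0 t = 0 \<longleftrightarrow> t \<le> (0::real)" for t by (simp add: max_def)
  then show ?thesis unfolding balanced_def rhoR_def by simp
qed

lemma cum_raise_0 [simp]: "cum_raise E \<alpha> s 0 u = 0"
  by (simp add: cum_raise_def)

lemma cum_raise_Suc:
  "cum_raise E \<alpha> s (Suc n) u
     = cum_raise E \<alpha> s n u + (if s n = u then rhoR E (alpha_seq E \<alpha> s n) u / 2 else 0)"
proof -
  have "{k. k < Suc n \<and> s k = u}
          = (if s n = u then insert n {k. k < n \<and> s k = u} else {k. k < n \<and> s k = u})"
    by (auto simp: less_Suc_eq)
  then show ?thesis by (simp add: cum_raise_def)
qed

lemma cum_raise_nonneg: "0 \<le> cum_raise E \<alpha> s n u"
  unfolding cum_raise_def by (rule sum_nonneg) (simp add: rhoR_nonneg)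

lemma alpha_seq_eq_alphaR_cum_raise: "alpha_seq E \<alpha> s n = alphaR \<alpha> (cum_raise E \<alpha> s n)"
proof (induction n)
  case 0
  then show ?case by (auto simp: alphaR_def)
next
  case (Suc n)
  show ?case
  proof (intro ext)
    fix a b
    show "alpha_seq E \<alpha> s (Suc n) a b = alphaR \<alpha> (cum_raise E \<alpha> s (Suc n)) a b"
      using Suc rhoR_nonneg[of E "alpha_seq E \<alpha> s n" "s n"]
      by (auto simp: raise_op_def alphaR_def cum_raise_Suc)
  qed
qed

text \<open>The left-hand side is the potential at x after raising x, so raising is monotone in the
  potential.\<close>
lemma raise_step_mono:
  fixes E :: "'v::finite \<Rightarrow> 'v \<Rightarrow> bool" and \<alpha> :: "'v \<Rightarrow> 'v \<Rightarrow> real"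
  assumes le: "\<And>u. r u \<le> r' u" and "\<exists>u. E u x" "\<exists>w. E x w"
  shows "r x + rhoR E (alphaR \<alpha> r) x / 2 \<le> r' x + rhoR E (alphaR \<alpha> r') x / 2"
proof -
  have "alpha_out E (alphaR \<alpha> r) x \<le> alpha_out E (alphaR \<alpha> r') x + r' x - r x"
  proof (rule alpha_out_le[of E x, OF assms(3)])
    fix w assume "E x w"
    then show "alphaR \<alpha> r x w \<le> alpha_out E (alphaR \<alpha> r') x + r' x - r x"
      using le[of w] alpha_out_ge[of E x w "alphaR \<alpha> r'"] by (simp add: alphaR_def)
  qed
  moreover have "alpha_in E (alphaR \<alpha> r') x \<le> alpha_in E (alphaR \<alpha> r) x + r' x - r x"
  proof (rule alpha_in_le[of E x, OF assms(2)])
    fix u assume "E u x"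
    then show "alphaR \<alpha> r' u x \<le> alpha_in E (alphaR \<alpha> r) x + r' x - r x"
      using le[of u] alpha_in_ge[of E u x "alphaR \<alpha> r"] by (simp add: alphaR_def)
  qed
  ultimately show ?thesis
    using le[of x] unfolding rhoR_def max_def by (auto simp: field_simps)
qed

lemma cum_raise_le_balancing_potential:
  fixes E :: "'v::finite \<Rightarrow> 'v \<Rightarrow> bool" and \<alpha> :: "'v \<Rightarrow> 'v \<Rightarrow> real"
  assumes "\<And>x. \<exists>u. E u x" "\<And>x. \<exists>w. E x w"
    and q_nonneg: "\<And>x. 0 \<le> q x" and q_balanced: "balanced E (alphaR \<alpha> q)"
  shows "cum_raise E \<alpha> s n u \<le> q u"
proof (induction n arbitrary: u)
  case 0
  then show ?case using q_nonneg by simp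
next
  case (Suc n)
  show ?case
  proof (cases "s n = u")
    case True
    have "cum_raise E \<alpha> s n u + rhoR E (alphaR \<alpha> (cum_raise E \<alpha> s n)) u / 2
            \<le> q u + rhoR E (alphaR \<alpha> q) u / 2"
      by (rule raise_step_mono) (use Suc assms in auto)
    then show ?thesis
      using True q_balanced
      by (simp add: cum_raise_Suc alpha_seq_eq_alphaR_cum_raise balanced_iff_rhoR_eq_0)
  next
    case False
    then show ?thesis using Suc by (simp add: cum_raise_Suc)
  qed
qed

lemma balanced_limit_of_cum_raise:
  fixes E :: "'v::finite \<Rightarrow> 'v \<Rightarrow> bool" and \<alpha> :: "'v \<Rightarrow> 'v \<Rightarrow> real"
  assumes in_edge: "\<And>x. \<exists>u. E u x" and out_edge: "\<And>x. \<exists>w. E x w"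
    and fair: "fair_seq s" and lim: "\<And>u. (\<lambda>n. cum_raise E \<alpha> s n u) \<longlonglongrightarrow> rstar u"
  shows "balanced E (alphaR \<alpha> rstar)"
  unfolding balanced_iff_rhoR_eq_0
proof (rule allI, rule ccontr)
  fix x
  let ?p = "rhoR E (alphaR \<alpha> rstar) x"
  assume "?p \<noteq> 0"
  then have pos: "?p > 0" using rhoR_nonneg[of E "alphaR \<alpha> rstar" x] by linarith
  define e where "e = ?p / 16"
  have "e > 0" using pos by (simp add: e_def)
  then have "eventually (\<lambda>n. \<forall>u. dist (cum_raise E \<alpha> s n u) (rstar u) < e) sequentially"
    by (intro eventually_all_finite allI tendstoD[OF lim])
  then obtain N where N: "\<And>n u. n \<ge> N \<Longrightarrow> \<bar>cum_raise E \<alpha> s n u - rstar u\<bar> < e"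
    by (auto simp: eventually_sequentially dist_real_def)
  from fair obtain n where n: "n \<ge> N" "s n = x"
    unfolding fair_seq_def infinite_nat_iff_unbounded_le by blast
  have step: "cum_raise E \<alpha> s (Suc n) x - cum_raise E \<alpha> s n x
                = rhoR E (alphaR \<alpha> (cum_raise E \<alpha> s n)) x / 2"
    using n by (simp add: cum_raise_Suc alpha_seq_eq_alphaR_cum_raise)
  have "\<bar>rhoR E (alphaR \<alpha> (cum_raise E \<alpha> s n)) x - ?p\<bar> \<le> 4 * e"
    by (rule rhoR_alphaR_abs_diff_le) (use in_edge out_edge N[OF n(1)] in \<open>auto intro: less_imp_le\<close>)
  moreover have "\<bar>cum_raise E \<alpha> s (Suc n) x - rstar x\<bar> < e" "\<bar>cum_raise E \<alpha> s n x - rstar x\<bar> < e"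
    using N n by simp_all
  ultimately show False using step e_def pos by (simp add: abs_less_iff abs_le_iff)
qed

text \<open>A maximising in-edge w \<rightarrow> u of \<alpha> is either no heavier than in the balanced function
  (if r w \<le> r u) or leaves a vertex w raised more than u, whose out-weights exceed its in-weights
  by at most its imbalance; iterating upwards collects each imbalance at most once.\<close>
lemma alpha_in_le_bound_plus_rho_above:
  fixes E :: "'v::finite \<Rightarrow> 'v \<Rightarrow> bool" and \<alpha> :: "'v \<Rightarrow> 'v \<Rightarrow> real" and r :: "'v \<Rightarrow> real"
  assumes in_edge: "\<And>x. \<exists>u. E u x"
    and bound: "\<And>c. c0 < r c \<Longrightarrow> alpha_in E (alphaR \<alpha> r) c \<le> X"
  shows "c0 < r u \<Longrightarrow> alpha_in E \<alpha> u \<le> X + (\<Sum>c\<in>{c. r u < r c}. rhoR E \<alpha> c)"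
proof (induction "card {c. r u < r c}" arbitrary: u rule: less_induct)
  case less
  obtain w where w: "E w u" "\<alpha> w u = alpha_in E \<alpha> u"
    using alpha_in_attained[of E u \<alpha>] in_edge by blast
  show ?case
  proof (cases "r w \<le> r u")
    case True
    have "\<alpha> w u \<le> alphaR \<alpha> r w u" using True by (simp add: alphaR_def)
    also have "\<dots> \<le> X"
      using alpha_in_ge[of E w u "alphaR \<alpha> r", OF w(1)] bound[OF less.prems] by (rule order_trans)
    finally have "alpha_in E \<alpha> u \<le> X" using w(2) by simp
    then show ?thesis
      by (rule add_increasing2[OF sum_nonneg[OF rhoR_nonneg]])
  next
    case False
    then have sub: "{c. r w < r c} \<subset> {c. r u < r c}"
      by (auto intro: less_trans)
    have IH: "alpha_in E \<alpha> w \<le> X + (\<Sum>c\<in>{c. r w < r c}. rhoR E \<alpha> c)"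
      using less.hyps[OF psubset_card_mono[OF _ sub]] less.prems False by auto
    have "\<alpha> w u \<le> alpha_in E \<alpha> w + rhoR E \<alpha> w"
      using alpha_out_ge[of E w u \<alpha>] w(1) alpha_out_le_alpha_in_plus_rhoR[of E \<alpha> w] by linarith
    also have "\<dots> \<le> X + ((\<Sum>c\<in>{c. r w < r c}. rhoR E \<alpha> c) + rhoR E \<alpha> w)"
      using IH by linarith
    also have "\<dots> = X + (\<Sum>c\<in>insert w {c. r w < r c}. rhoR E \<alpha> c)"
      by simp
    also have "\<dots> \<le> X + (\<Sum>c\<in>{c. r u < r c}. rhoR E \<alpha> c)"
      using False by (intro add_left_mono sum_mono2) (auto simp: rhoR_nonneg)
    finally show ?thesis using w by simp
  qed
qed

lemma alpha_out_le_bound_plus_rho_above: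
  fixes E :: "'v::finite \<Rightarrow> 'v \<Rightarrow> bool" and \<alpha> :: "'v \<Rightarrow> 'v \<Rightarrow> real" and r :: "'v \<Rightarrow> real"
  assumes in_edge: "\<And>x. \<exists>u. E u x"
    and bound: "\<And>c. c0 < r c \<Longrightarrow> alpha_in E (alphaR \<alpha> r) c \<le> X"
    and u: "c0 < r u"
  shows "alpha_out E \<alpha> u \<le> X + (\<Sum>c\<in>{c. c0 < r c}. rhoR E \<alpha> c)"
proof -
  have "alpha_out E \<alpha> u \<le> alpha_in E \<alpha> u + rhoR E \<alpha> u"
    by (rule alpha_out_le_alpha_in_plus_rhoR)
  also have "\<dots> \<le> X + ((\<Sum>c\<in>{c. r u < r c}. rhoR E \<alpha> c) + rhoR E \<alpha> u)"
    using alpha_in_le_bound_plus_rho_above[OF in_edge bound u] by linarith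
  also have "\<dots> = X + (\<Sum>c\<in>insert u {c. r u < r c}. rhoR E \<alpha> c)"
    by simp
  also have "\<dots> \<le> X + (\<Sum>c\<in>{c. c0 < r c}. rhoR E \<alpha> c)"
    using u by (intro add_left_mono sum_mono2) (auto simp: rhoR_nonneg)
  finally show ?thesis .
qed

lemma finite_serial_has_cycle:
  fixes R :: "('a::finite \<times> 'a) set"
  assumes "z \<in> Z" and serial: "\<And>a. a \<in> Z \<Longrightarrow> \<exists>b\<in>Z. (a, b) \<in> R"
  shows "\<exists>x. (x, x) \<in> R\<^sup>+"
proof (rule ccontr)
  assume "\<nexists>x. (x, x) \<in> R\<^sup>+"
  then have "wf (R\<inverse>)"
    by (intro finite_acyclic_wf_converse) (auto simp: acyclic_def)
  then obtain m where "m \<in> Z" "\<And>y. (y, m) \<in> R\<inverse> \<Longrightarrow> y \<notin> Z"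
    using wfE_min[of "R\<inverse>" z Z] assms(1) by metis
  then show False using serial by blast
qed

locale least_balancing_potential =
  fixes E :: "'v::finite \<Rightarrow> 'v \<Rightarrow> bool" and \<alpha> :: "'v \<Rightarrow> 'v \<Rightarrow> real" and r :: "'v \<Rightarrow> real"
  assumes in_edge: "\<And>x. \<exists>u. E u x" and out_edge: "\<And>x. \<exists>w. E x w"
    and nonneg: "\<And>x. 0 \<le> r x"
    and balanced_alphaR: "balanced E (alphaR \<alpha> r)"
    and least: "\<And>q x. (\<And>y. 0 \<le> q y) \<Longrightarrow> balanced E (alphaR \<alpha> q) \<Longrightarrow> r x \<le> q x"
begin

lemma alpha_out_le_alpha_in: "alpha_out E (alphaR \<alpha> r) x \<le> alpha_in E (alphaR \<alpha> r) x"
  using balanced_alphaR by (simp add: balanced_def)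

text \<open>Outside Y the lowered function stays balanced for free (out-weights only drop, in-weights
  only grow), so balance on Y would contradict minimality of r.\<close>
lemma no_balanced_lowering:
  fixes Y :: "'v set" and s :: real
  defines "q \<equiv> \<lambda>x. if x \<in> Y then r x - s else r x"
  assumes "y0 \<in> Y" "0 < s" "\<And>y. y \<in> Y \<Longrightarrow> s \<le> r y"
    and balanced_on_Y: "\<And>y. y \<in> Y \<Longrightarrow> alpha_out E (alphaR \<alpha> q) y \<le> alpha_in E (alphaR \<alpha> q) y"
  shows False
proof -
  have "alpha_out E (alphaR \<alpha> q) x \<le> alpha_in E (alphaR \<alpha> q) x" if "x \<notin> Y" for x
  proof -
    obtain p where p: "E p x" "alphaR \<alpha> r p x = alpha_in E (alphaR \<alpha> r) x"
      using alpha_in_attained[of E x "alphaR \<alpha> r"] in_edge by blast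
    show ?thesis
    proof (rule alpha_out_le[of E x, OF out_edge])
      fix w assume "E x w"
      then have "alphaR \<alpha> q x w \<le> alpha_out E (alphaR \<alpha> r) x"
        using alpha_out_ge[of E x w "alphaR \<alpha> r"] that assms(3) by (auto simp: q_def alphaR_def)
      also have "\<dots> \<le> alphaR \<alpha> q p x"
        using alpha_out_le_alpha_in[of x] p(2) that assms(3) by (auto simp: q_def alphaR_def)
      also have "\<dots> \<le> alpha_in E (alphaR \<alpha> q) x"
        by (rule alpha_in_ge[of E p x, OF p(1)])
      finally show "alphaR \<alpha> q x w \<le> alpha_in E (alphaR \<alpha> q) x" .
    qed
  qed
  with balanced_on_Y have "balanced E (alphaR \<alpha> q)"
    unfolding balanced_def by blast
  moreover have "0 \<le> q y" for y
    using assms(4)[of y] nonneg[of y] by (simp add: q_def)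
  ultimately have "r y0 \<le> q y0" by (intro least)
  then show False using assms(2,3) by (simp add: q_def)
qed

lemma tight:
  assumes "0 < r x"
  shows "alpha_out E (alphaR \<alpha> r) x = alpha_in E (alphaR \<alpha> r) x"
proof (rule ccontr)
  let ?o = "alpha_out E (alphaR \<alpha> r) x" and ?i = "alpha_in E (alphaR \<alpha> r) x"
  assume "?o \<noteq> ?i"
  then have "?o < ?i" using alpha_out_le_alpha_in[of x] by linarith
  define s where "s = min (r x) ((?i - ?o) / 4)"
  define q where "q = (\<lambda>y. if y \<in> {x} then r y - s else r y)"
  have s: "0 < s" "s \<le> r x" "4 * s \<le> ?i - ?o"
    using \<open>?o < ?i\<close> assms by (auto simp: s_def min_def)
  have "\<bar>r y - q y\<bar> \<le> s" for y
    using s by (simp add: q_def)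
  then have "\<bar>alpha_out E (alphaR \<alpha> r) x - alpha_out E (alphaR \<alpha> q) x\<bar> \<le> 2 * s"
    and "\<bar>alpha_in E (alphaR \<alpha> r) x - alpha_in E (alphaR \<alpha> q) x\<bar> \<le> 2 * s"
    by (intro alpha_out_alphaR_abs_diff_le alpha_in_alphaR_abs_diff_le out_edge in_edge; simp)+
  then have "alpha_out E (alphaR \<alpha> q) x \<le> alpha_in E (alphaR \<alpha> q) x"
    using s(3) by (simp add: abs_le_iff)
  then show False
    using no_balanced_lowering[of x "{x}" s] s unfolding q_def by auto
qed

text \<open>Y can be lowered by the smallest slack: X-edges out of Y stay inside Y, and every other
  edge out of Y is strictly lighter than X.\<close>
lemma no_closed_top_set:
  assumes "y0 \<in> Y" and pos: "\<And>y. y \<in> Y \<Longrightarrow> 0 < r y"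
    and pred: "\<And>y. y \<in> Y \<Longrightarrow> \<exists>p\<in>Y. E p y \<and> alphaR \<alpha> r p y = X"
    and le_X: "\<And>y w. y \<in> Y \<Longrightarrow> E y w \<Longrightarrow> alphaR \<alpha> r y w \<le> X"
    and closed: "\<And>y w. y \<in> Y \<Longrightarrow> E y w \<Longrightarrow> alphaR \<alpha> r y w = X \<Longrightarrow> w \<in> Y"
  shows False
proof -
  define D where
    "D = (\<lambda>(y, w). X - alphaR \<alpha> r y w) ` {(y, w). y \<in> Y \<and> w \<notin> Y \<and> E y w} \<union> r ` Y"
  define s where "s = Min D"
  have "finite D" "D \<noteq> {}"
    using assms(1) by (auto simp: D_def)
  moreover have "0 < d" if "d \<in> D" for d
    using that le_X closed pos by (force simp: D_def)
  ultimately have s_pos: "0 < s" and s_le: "\<And>d. d \<in> D \<Longrightarrow> s \<le> d"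
    unfolding s_def by (auto intro: Min_in Min_le)
  define q where "q = (\<lambda>x. if x \<in> Y then r x - s else r x)"
  have "alpha_out E (alphaR \<alpha> q) y \<le> alpha_in E (alphaR \<alpha> q) y" if y: "y \<in> Y" for y
  proof -
    obtain p where p: "p \<in> Y" "E p y" "alphaR \<alpha> r p y = X"
      using pred[OF y] by blast
    have "alpha_out E (alphaR \<alpha> q) y \<le> X"
    proof (rule alpha_out_le[of E y, OF out_edge])
      fix w assume w: "E y w"
      show "alphaR \<alpha> q y w \<le> X"
      proof (cases "w \<in> Y")
        case True
        then show ?thesis using le_X[OF y w] y by (simp add: q_def alphaR_def)
      next
        case False
        then have "s \<le> X - alphaR \<alpha> r y w"
          using y w by (intro s_le) (force simp: D_def)
        then show ?thesis using False y by (simp add: q_def alphaR_def)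
      qed
    qed
    also have "X = alphaR \<alpha> q p y"
      using p y by (simp add: q_def alphaR_def)
    also have "\<dots> \<le> alpha_in E (alphaR \<alpha> q) y"
      by (rule alpha_in_ge[of E p y, OF p(2)])
    finally show ?thesis .
  qed
  moreover have "s \<le> r y" if "y \<in> Y" for y
    using that by (intro s_le) (simp add: D_def)
  ultimately show False
    using no_balanced_lowering[of y0 Y s] assms(1) s_pos unfolding q_def by blast
qed

text \<open>Otherwise the X-edges between vertices raised more than v with in-level X form a serial
  relation, and the vertices reachable from one of its cycles form a set as in
  no_closed_top_set.\<close>
lemma exists_top_exit_edge:
  assumes "r v < r w"
  shows "\<exists>a b. r v < r a \<and> r b \<le> r v \<and> E a b \<and>
           alphaR \<alpha> r a b = Max {alpha_in E (alphaR \<alpha> r) c | c. r v < r c}"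
proof (rule ccontr)
  let ?\<beta> = "alphaR \<alpha> r"
  define X where "X = Max {alpha_in E ?\<beta> c | c. r v < r c}"
  assume "\<not> ?thesis"
  then have stays_above: "\<And>a b. r v < r a \<Longrightarrow> E a b \<Longrightarrow> ?\<beta> a b = X \<Longrightarrow> r v < r b"
    unfolding X_def by force
  have in_le_X: "alpha_in E ?\<beta> c \<le> X" if "r v < r c" for c
    unfolding X_def using that by (rule Max_setcompr_ge)
  obtain z0 where z0: "r v < r z0" "alpha_in E ?\<beta> z0 = X"
    using Max_setcompr_attained[of "\<lambda>c. r v < r c" "alpha_in E ?\<beta>"] assms unfolding X_def by auto
  define Z where "Z = {c. r v < r c \<and> alpha_in E ?\<beta> c = X}"
  define Rel where "Rel = {(a, b). a \<in> Z \<and> b \<in> Z \<and> E a b \<and> ?\<beta> a b = X}"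
  have X_edge_in_Z: "b \<in> Z" if "a \<in> Z" "E a b" "?\<beta> a b = X" for a b
  proof -
    have "r v < r b" using stays_above[of a b] that by (simp add: Z_def)
    moreover have "X \<le> alpha_in E ?\<beta> b" using alpha_in_ge[of E a b ?\<beta>] that by simp
    ultimately show ?thesis using in_le_X[of b] by (simp add: Z_def)
  qed
  have serial: "\<exists>b\<in>Z. (a, b) \<in> Rel" if a: "a \<in> Z" for a
  proof -
    have "0 < r a" using a nonneg[of v] by (simp add: Z_def)
    then have "alpha_out E ?\<beta> a = X" using tight a by (simp add: Z_def)
    moreover obtain b where "E a b" "?\<beta> a b = alpha_out E ?\<beta> a"
      using alpha_out_attained[of E a ?\<beta>] out_edge by blast
    ultimately show ?thesis using a X_edge_in_Z by (auto simp: Rel_def)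
  qed
  obtain x0 where x0: "(x0, x0) \<in> Rel\<^sup>+"
    using finite_serial_has_cycle[of z0 Z Rel] serial z0 by (auto simp: Z_def)
  define Y where "Y = {y. \<exists>x. (x, x) \<in> Rel\<^sup>+ \<and> (x, y) \<in> Rel\<^sup>+}"
  have Y_Z: "y \<in> Z" if "y \<in> Y" for y
    using that unfolding Y_def by (auto elim: tranclE simp: Rel_def)
  show False
  proof (rule no_closed_top_set[of x0 Y X])
    show "x0 \<in> Y" using x0 by (auto simp: Y_def)
  next
    fix y assume "y \<in> Y"
    then show "0 < r y" using Y_Z nonneg[of v] by (force simp: Z_def)
  next
    fix y assume "y \<in> Y"
    then obtain x where x: "(x, x) \<in> Rel\<^sup>+" "(x, y) \<in> Rel\<^sup>+" by (auto simp: Y_def)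
    from x(2) obtain p where "(p, y) \<in> Rel" "p = x \<or> (x, p) \<in> Rel\<^sup>+"
      by (cases rule: tranclE) auto
    with x(1) show "\<exists>p\<in>Y. E p y \<and> ?\<beta> p y = X" by (auto simp: Y_def Rel_def)
  next
    fix y w assume "y \<in> Y" "E y w"
    then show "?\<beta> y w \<le> X"
      using alpha_out_ge[of E y w ?\<beta>] alpha_out_le_alpha_in[of y] Y_Z[of y] by (simp add: Z_def)
  next
    fix y w assume y: "y \<in> Y" and w: "E y w" "?\<beta> y w = X"
    then have "(y, w) \<in> Rel" using Y_Z[OF y] X_edge_in_Z[OF Y_Z[OF y]] by (simp add: Rel_def)
    with y show "w \<in> Y" unfolding Y_def by (blast intro: trancl_into_trancl)
  qed
qed

lemma next_level_gap:
  assumes "r v < r w" and w_next: "\<And>c. r v < r c \<Longrightarrow> r w \<le> r c"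
  shows "r w - r v \<le> (\<Sum>c\<in>{c. r v < r c}. rhoR E \<alpha> c)"
proof -
  define X where "X = Max {alpha_in E (alphaR \<alpha> r) c | c. r v < r c}"
  obtain a b where ab: "r v < r a" "r b \<le> r v" "E a b" "alphaR \<alpha> r a b = X"
    using exists_top_exit_edge[OF assms(1)] unfolding X_def by blast
  have "\<And>c. r v < r c \<Longrightarrow> alpha_in E (alphaR \<alpha> r) c \<le> X"
    unfolding X_def by (rule Max_setcompr_ge)
  then have "\<alpha> a b \<le> X + (\<Sum>c\<in>{c. r v < r c}. rhoR E \<alpha> c)"
    using alpha_out_ge[of E a b \<alpha>] ab(1,3) alpha_out_le_bound_plus_rho_above[OF in_edge]
    by (meson order_trans)
  moreover have "\<alpha> a b = X + r a - r b" using ab(4) by (simp add: alphaR_def)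
  ultimately show ?thesis using w_next[OF ab(1)] ab(2) by linarith
qed

lemma raise_diff_le_card_mul_rho:
  "r u - r v \<le> real (card {c. r v < r c}) * (\<Sum>c\<in>{c. r v < r c}. rhoR E \<alpha> c)"
proof (induction "card {c. r v < r c}" arbitrary: v rule: less_induct)
  case less
  let ?S = "{c. r v < r c}" and ?\<rho> = "\<lambda>S. \<Sum>c\<in>S. rhoR E \<alpha> c"
  have \<rho>_nonneg: "0 \<le> ?\<rho> S" for S by (rule sum_nonneg) (rule rhoR_nonneg)
  show ?case
  proof (cases "r u \<le> r v")
    case True
    moreover have "0 \<le> real (card ?S) * ?\<rho> ?S" using \<rho>_nonneg[of ?S] by simp
    ultimately show ?thesis by linarith
  next
    case False
    have "Min (r ` ?S) \<in> r ` ?S" by (rule Min_in) (use False not_le in auto)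
    then obtain w where w: "w \<in> ?S" "r w = Min (r ` ?S)" by auto
    have w_next: "\<And>c. r v < r c \<Longrightarrow> r w \<le> r c" using w(2) Min_le[of "r ` ?S"] by auto
    let ?Sw = "{c. r w < r c}"
    have sub: "?Sw \<subset> ?S" using w(1) by (auto intro: less_trans)
    then have card_lt: "card ?Sw < card ?S" by (simp add: psubset_card_mono)
    have "r u - r v = (r u - r w) + (r w - r v)" by simp
    also have "\<dots> \<le> real (card ?Sw) * ?\<rho> ?Sw + ?\<rho> ?S"
      using less.hyps[OF card_lt] next_level_gap[OF _ w_next] w(1) by (intro add_mono) auto
    also have "\<dots> \<le> real (card ?Sw) * ?\<rho> ?S + ?\<rho> ?S"
      using sub by (intro add_right_mono mult_left_mono sum_mono2) (auto simp: rhoR_nonneg)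
    also have "\<dots> = (real (card ?Sw) + 1) * ?\<rho> ?S"
      by (simp add: algebra_simps)
    also have "\<dots> \<le> real (card ?S) * ?\<rho> ?S"
      by (intro mult_right_mono \<rho>_nonneg) (use card_lt in linarith)
    finally show ?thesis .
  qed
qed

lemma Sset_eq: "Sset r v = {c. r v < r c}"
  by (auto simp: Sset_def height_def)

lemma momentum_le: "momentum E \<alpha> r v \<le> rho_set E \<alpha> (Sset r v) + zval E \<alpha> r v"
proof -
  define X where "X = Max {level E \<alpha> r u | u. height r u \<le> height r v}"
  let ?\<rho> = "\<Sum>c\<in>{c. r v < r c}. rhoR E \<alpha> c"
  have level_le_X: "alpha_in E (alphaR \<alpha> r) c \<le> X" if "r v \<le> r c" for c
    unfolding X_def using Max_setcompr_ge[of "\<lambda>u. height r u \<le> height r v" c "level E \<alpha> r"] that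
    by (simp add: height_def level_def alpha_in_def)
  have "\<alpha> u v \<le> X + ?\<rho>" if u: "E u v" for u
  proof (cases "r u \<le> r v")
    case True
    then have "\<alpha> u v \<le> alphaR \<alpha> r u v" by (simp add: alphaR_def)
    also have "\<dots> \<le> X" using alpha_in_ge[of E u v] u level_le_X[of v] by (meson order_trans order_refl)
    finally show ?thesis by (simp add: add_increasing2 sum_nonneg rhoR_nonneg)
  next
    case False
    have "\<alpha> u v \<le> alpha_out E \<alpha> u" by (rule alpha_out_ge[of E u v \<alpha>, OF u])
    also have "\<dots> \<le> X + ?\<rho>"
      using False level_le_X by (intro alpha_out_le_bound_plus_rho_above[OF in_edge]) auto
    finally show ?thesis .
  qed
  then have "momentum E \<alpha> r v \<le> X + ?\<rho> - level E \<alpha> r v"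
    unfolding momentum_def by (intro Max_setcompr_le) (auto simp: in_edge)
  then show ?thesis
    by (simp add: zval_def X_def rho_set_def Sset_eq)
qed

lemma height_diff_le:
  "height r v - Min (range (height r)) \<le> real (card (Sset r v)) * rho_set E \<alpha> (Sset r v)"
proof -
  have "Min (range (height r)) \<in> range (height r)" by (rule Min_in) auto
  then obtain u where "Min (range (height r)) = height r u" by blast
  then show ?thesis
    using raise_diff_le_card_mul_rho[of u v] by (simp add: height_def rho_set_def Sset_eq)
qed

end

lemma strongly_connected_in_edge:
  assumes "strongly_connected E" shows "\<exists>u. E u x"
proof -
  have "E\<^sup>+\<^sup>+ x x" using assms by (simp add: strongly_connected_def)
  then show ?thesis by (cases rule: tranclp.cases) auto
qed

lemma strongly_connected_out_edge:
  assumes "strongly_connected E" shows "\<exists>w. E x w"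
  using assms tranclpD unfolding strongly_connected_def by metis

lemma least_balancing_potential_limit:
  fixes E :: "'v::finite \<Rightarrow> 'v \<Rightarrow> bool" and \<alpha> :: "'v \<Rightarrow> 'v \<Rightarrow> real"
  assumes sc: "strongly_connected E" and fair: "fair_seq s"
    and lim: "\<And>u. (\<lambda>n. cum_raise E \<alpha> s n u) \<longlonglongrightarrow> rstar u"
  shows "least_balancing_potential E \<alpha> rstar"
proof
  fix x
  show "\<exists>u. E u x" by (rule strongly_connected_in_edge[OF sc])
  show "\<exists>w. E x w" by (rule strongly_connected_out_edge[OF sc])
  show "0 \<le> rstar x"
    by (rule LIMSEQ_le_const[OF lim]) (auto simp: cum_raise_nonneg)
next
  show "balanced E (alphaR \<alpha> rstar)"
    by (rule balanced_limit_of_cum_raise[OF _ _ fair lim])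
       (use strongly_connected_in_edge[OF sc] strongly_connected_out_edge[OF sc] in auto)
next
  fix q :: "'v \<Rightarrow> real" and x
  assume "\<And>y. 0 \<le> q y" "balanced E (alphaR \<alpha> q)"
  then show "rstar x \<le> q x"
    using cum_raise_le_balancing_potential strongly_connected_in_edge[OF sc]
      strongly_connected_out_edge[OF sc]
    by (intro LIMSEQ_le_const2[OF lim]) blast
qed

theorem lemma6:
  fixes E :: "'v::finite \<Rightarrow> 'v \<Rightarrow> bool"
    and \<alpha> :: "'v \<Rightarrow> 'v \<Rightarrow> real"
    and s :: "nat \<Rightarrow> 'v"
    and rstar :: "'v \<Rightarrow> real"
    and v :: 'v
  assumes "strongly_connected E"
    and "fair_seq s"
    and "\<And>u. (\<lambda>n. cum_raise E \<alpha> s n u) \<longlonglongrightarrow> rstar u"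
  shows "momentum E \<alpha> rstar v \<le> rho_set E \<alpha> (Sset rstar v) + zval E \<alpha> rstar v
       \<and> height rstar v - Min (range (height rstar))
           \<le> real (card (Sset rstar v)) * rho_set E \<alpha> (Sset rstar v)"
proof -
  interpret least_balancing_potential E \<alpha> rstar
    using assms by (rule least_balancing_potential_limit)
  show ?thesis using momentum_le height_diff_le by blast
qed

end
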